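(* Let $d\geq 2$ and let $\mathsf{M}_1,\mathsf{M}_2$ be two sharp $d$-outcome measurements on $\mathbb{C}^d$, i.e. $\mathsf{M}_1(x)=|\varphi_x\rangle\langle\varphi_x|$ and $\mathsf{M}_2(y)=|\psi_y\rangle\langle\psi_y|$ for orthonormal bases $\{\varphi_x\}_{x=1}^d$, $\{\psi_y\}_{y=1}^d$. Then $$\bar{P}_{\rm qrac}(\mathsf{M}_1,\mathsf{M}_2)=\frac{1}{2d^2}\sum_{x,y=1}^d \big\|\mathsf{M}_1(x)+\mathsf{M}_2(y)\big\| \geq \frac12\left(1+\frac1d\right),$$ with equality if and only if $\mathsf{M}_1$ and $\mathsf{M}_2$ are compatible (equivalently, there is a permutation $\sigma$ of $\{1,\dots,d\}$ with $\mathsf{M}_2(y)=\mathsf{M}_1(\sigma(y))$ for all $y$).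
   Context: $\|\cdot\|$ is the operator norm. Two POVMs $\mathsf{M}_1,\mathsf{M}_2$ are compatible if there is a POVM $\mathsf{G}$ on the product outcome set with $\sum_y\mathsf{G}(x,y)=\mathsf{M}_1(x)$ and $\sum_x\mathsf{G}(x,y)=\mathsf{M}_2(y)$. $\bar P_{\rm qrac}$ is the optimal (over encodings) average success probability in the $(2,d)$ quantum random access code, given by the displayed formula, and $\frac12(1+\frac1d)$ is the optimal classical $(2,d)$ random access code success probability. *)

theory Defs
  imports "HOL-Analysis.Analysis"
begin

type_synonym 'n cmat = "complex ^ 'n ^ 'n"

definition cinner :: "complex ^ 'n::finite \<Rightarrow> complex ^ 'n \<Rightarrow> complex" where
  "cinner u v = (\<Sum>i\<in>UNIV. cnj (u $ i) * v $ i)"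

definition orthonormal_basis :: "('n::finite \<Rightarrow> complex ^ 'n) \<Rightarrow> bool" where
  "orthonormal_basis b \<longleftrightarrow> (\<forall>x y. cinner (b x) (b y) = (if x = y then 1 else 0))"

definition ketbra :: "complex ^ 'n::finite \<Rightarrow> 'n cmat" where
  "ketbra v = (\<chi> i j. v $ i * cnj (v $ j))"

definition psd :: "'n::finite cmat \<Rightarrow> bool" where
  "psd A \<longleftrightarrow> (\<forall>v. Im (cinner v (A *v v)) = 0 \<and> Re (cinner v (A *v v)) \<ge> 0)"

definition povm :: "('a::finite \<Rightarrow> 'n::finite cmat) \<Rightarrow> bool" where
  "povm M \<longleftrightarrow> (\<forall>x. psd (M x)) \<and> (\<Sum>x\<in>UNIV. M x) = mat 1"

definition compatible :: "('a::finite \<Rightarrow> 'n::finite cmat) \<Rightarrow> ('b::finite \<Rightarrow> 'n cmat) \<Rightarrow> bool" where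
  "compatible M1 M2 \<longleftrightarrow> (\<exists>G :: 'a \<times> 'b \<Rightarrow> 'n cmat. povm G \<and>
      (\<forall>x. (\<Sum>y\<in>UNIV. G (x, y)) = M1 x) \<and> (\<forall>y. (\<Sum>x\<in>UNIV. G (x, y)) = M2 y))"

definition opnorm :: "'n::finite cmat \<Rightarrow> real" where
  "opnorm A = onorm (\<lambda>v. A *v v)"

definition P_qrac :: "('n::finite \<Rightarrow> 'n cmat) \<Rightarrow> ('n \<Rightarrow> 'n cmat) \<Rightarrow> real" where
  "P_qrac M1 M2 = (1 / (2 * real CARD('n)^2)) * (\<Sum>x\<in>UNIV. \<Sum>y\<in>UNIV. opnorm (M1 x + M2 y))"

end

theory Submission
  imports Defs
begin

(* For unit vectors a, b the operator ketbra a + ketbra b has norm 1 + |<a,b>|: the vector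
   a + w b, with the phase w chosen so that w <a,b> = |<a,b>|, is an eigenvector for this value,
   and Cauchy-Schwarz gives the matching upper bound. Hence P_qrac = 1/2 + S/(2 d^2), where S is
   the sum of the moduli of the overlaps <phi x, psi y>.
   The squared overlaps form a doubly stochastic matrix, so S >= d, with equality iff every
   overlap has modulus 0 or 1, i.e. iff the two bases agree up to a permutation and phases.
   Conversely a joint POVM G forces S <= d: testing G on a + w b for a = phi x, b = psi y yields
   |<phi x,psi y>| + |<phi x,psi y>|^2 <= <phi x, G(x,y) phi x> + <psi y, G(x,y) psi y>,
   and summing over x, y gives S + d <= 2 d. *)

lemma cinner_add_left: "cinner (u + v) w = cinner u w + cinner v w"
  by (simp add: cinner_def distrib_right sum.distrib)

lemma cinner_add_right: "cinner u (v + w) = cinner u v + cinner u w"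
  by (simp add: cinner_def distrib_left sum.distrib)

lemma cinner_diff_left: "cinner (u - v) w = cinner u w - cinner v w"
  by (simp add: cinner_def left_diff_distrib sum_subtractf)

lemma cinner_diff_right: "cinner u (v - w) = cinner u v - cinner u w"
  by (simp add: cinner_def right_diff_distrib sum_subtractf)

lemma cinner_scale_left: "cinner (a *s u) v = cnj a * cinner u v"
  by (simp add: cinner_def sum_distrib_left mult_ac)

lemma cinner_scale_right: "cinner u (a *s v) = a * cinner u v"
  by (simp add: cinner_def sum_distrib_left mult_ac)

lemma cinner_sum_right: "cinner u (\<Sum>x\<in>S. f x) = (\<Sum>x\<in>S. cinner u (f x))"
  unfolding cinner_def sum_component sum_distrib_left by (rule sum.swap)

lemma cinner_commute: "cinner v u = cnj (cinner u v)"
  by (simp add: cinner_def mult.commute)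

lemma cmod_cinner_commute: "cmod (cinner v u) = cmod (cinner u v)"
  by (metis cinner_commute complex_mod_cnj)

lemma cnj_mult_self: "cnj z * z = of_real ((cmod z)\<^sup>2)"
  by (metis complex_norm_square mult.commute)

lemma cinner_self: "cinner v v = of_real ((norm v)\<^sup>2)"
proof -
  have "cinner v v = (\<Sum>i\<in>UNIV. of_real ((cmod (v $ i))\<^sup>2))"
    unfolding cinner_def by (intro sum.cong refl cnj_mult_self)
  also have "\<dots> = of_real ((norm v)\<^sup>2)"
    by (simp add: norm_vec_def L2_set_def sum_nonneg)
  finally show ?thesis .
qed

lemma cinner_self_unit: "norm v = 1 \<Longrightarrow> cinner v v = 1"
  by (simp add: cinner_self)

lemma norm_scale_cvec: "norm (a *s (v :: complex ^ 'n::finite)) = cmod a * norm v"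
  by (simp add: norm_vec_def norm_mult L2_set_right_distrib)

lemma cinner_Cauchy_Schwarz: "cmod (cinner u v) \<le> norm u * norm v"
proof -
  have "cmod (cinner u v) \<le> (\<Sum>i\<in>UNIV. \<bar>cmod (u $ i)\<bar> * \<bar>cmod (v $ i)\<bar>)"
    unfolding cinner_def by (rule order_trans[OF norm_sum]) (simp add: norm_mult)
  also have "\<dots> \<le> norm u * norm v"
    unfolding norm_vec_def by (rule L2_set_mult_ineq)
  finally show ?thesis .
qed

section \<open>Rank-one projectors and quadratic forms\<close>

lemma ketbra_mult_vec: "ketbra a *v v = cinner a v *s a"
  by (simp add: vec_eq_iff matrix_vector_mult_def ketbra_def cinner_def sum_distrib_left mult_ac)

lemma sum_matrix_mult_vec: "(\<Sum>x\<in>S. A x) *v v = (\<Sum>x\<in>S. A x *v (v :: 'a::comm_ring_1 ^ 'n::finite))"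
  by (simp add: vec_eq_iff matrix_vector_mult_def sum_component sum_distrib_right)
     (intro allI sum.swap)

definition qform :: "'n::finite cmat \<Rightarrow> complex ^ 'n \<Rightarrow> complex" where
  "qform A v = cinner v (A *v v)"

lemma qform_ketbra: "qform (ketbra a) v = of_real ((cmod (cinner a v))\<^sup>2)"
  by (simp add: qform_def ketbra_mult_vec cinner_scale_right cinner_commute[of v]
      complex_norm_square [symmetric])

lemma qform_add: "qform (A + B) v = qform A v + qform B v"
  by (simp add: qform_def matrix_vector_mult_add_rdistrib cinner_add_right)

lemma qform_sum: "qform (\<Sum>x\<in>S. A x) v = (\<Sum>x\<in>S. qform (A x) v)"
  by (simp add: qform_def sum_matrix_mult_vec cinner_sum_right)

lemma qform_id: "qform (mat 1) v = of_real ((norm v)\<^sup>2)"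
  by (simp add: qform_def cinner_self)

lemma qform_scale: "qform A (a *s v) = of_real ((cmod a)\<^sup>2) * qform A v"
  by (simp add: qform_def vector_scalar_commute cinner_scale_left cinner_scale_right
      mult.assoc [symmetric] complex_norm_square [symmetric])

lemma qform_parallelogram: "qform A (u + w) + qform A (u - w) = 2 * qform A u + 2 * qform A w"
  by (simp add: qform_def matrix_vector_right_distrib matrix_vector_mult_diff_distrib
      cinner_add_left cinner_add_right cinner_diff_left cinner_diff_right algebra_simps)

lemma psd_qform_nonneg: "psd A \<Longrightarrow> 0 \<le> Re (qform A v)"
  by (simp add: psd_def qform_def)

lemma psd_qform_add_le:
  assumes "psd A"
  shows "Re (qform A (u + w)) \<le> 2 * Re (qform A u) + 2 * Re (qform A w)"
  using arg_cong[OF qform_parallelogram [of A u w], of Re] psd_qform_nonneg [OF assms, of "u - w"]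
  by simp

lemma psd_ketbra: "psd (ketbra a)"
  using qform_ketbra [of a] by (simp add: psd_def qform_def)

lemma orthonormal_basis_sum_ketbra:
  fixes b :: "'n::finite \<Rightarrow> complex ^ 'n"
  assumes "orthonormal_basis b"
  shows "(\<Sum>x\<in>UNIV. ketbra (b x)) = mat 1"
proof -
  define U :: "'n cmat" where "U = (\<chi> i x. b x $ i)"
  define V :: "'n cmat" where "V = (\<chi> x i. cnj (b x $ i))"
  have "V ** U = mat 1"
    using assms by (simp add: vec_eq_iff matrix_matrix_mult_def V_def U_def mat_def
        orthonormal_basis_def cinner_def)
  then have "U ** V = mat 1"
    by (simp add: matrix_left_right_inverse)
  then show ?thesis
    by (simp add: vec_eq_iff matrix_matrix_mult_def V_def U_def mat_def sum_component ketbra_def)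
qed

lemma orthonormal_basis_Parseval:
  assumes "orthonormal_basis b"
  shows "(\<Sum>x\<in>UNIV. (cmod (cinner (b x) v))\<^sup>2) = (norm v)\<^sup>2"
proof -
  have "complex_of_real ((norm v)\<^sup>2) = qform (\<Sum>x\<in>UNIV. ketbra (b x)) v"
    by (simp add: orthonormal_basis_sum_ketbra [OF assms] qform_id)
  also have "\<dots> = of_real (\<Sum>x\<in>UNIV. (cmod (cinner (b x) v))\<^sup>2)"
    by (simp add: qform_sum qform_ketbra)
  finally show ?thesis
    by (simp only: of_real_eq_iff)
qed

lemma orthonormal_basis_norm:
  assumes "orthonormal_basis b"
  shows "norm (b x) = 1"
proof -
  have "complex_of_real ((norm (b x))\<^sup>2) = 1"
    using assms cinner_self [of "b x"] by (simp add: orthonormal_basis_def)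
  then have "(norm (b x))\<^sup>2 = 1"
    by (metis of_real_eq_1_iff)
  then show ?thesis
    using norm_ge_zero [of "b x"] by (simp add: power2_eq_1_iff)
qed

section \<open>Norm of a sum of two rank-one projectors\<close>

lemma exists_phase: "\<exists>\<omega>. cmod \<omega> = 1 \<and> \<omega> * c = of_real (cmod c)"
proof (cases "c = 0")
  case False
  have "cnj c / of_real (cmod c) * c = of_real (cmod c)"
    using False by (simp add: cnj_mult_self power2_eq_square)
  with False show ?thesis
    by (intro exI [of _ "cnj c / of_real (cmod c)"]) (simp add: norm_divide)
qed (auto intro: exI [of _ 1])

lemma norm_ketbra_add_mult_vec_le:
  assumes "norm a = 1" "norm b = 1"
  shows "norm ((ketbra a + ketbra b) *v v) \<le> (1 + cmod (cinner a b)) * norm v"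
proof -
  define \<alpha> \<beta> c where "\<alpha> = cinner a v" and "\<beta> = cinner b v" and "c = cinner a b"
  define w where "w = (ketbra a + ketbra b) *v v"
  define s where "s = (cmod \<alpha>)\<^sup>2 + (cmod \<beta>)\<^sup>2"
  \<comment> \<open>s is the quadratic form of the operator at v; we show |w|^2 <= (1 + |c|) s <= (1 + |c|) |v| |w|.\<close>
  have w: "w = \<alpha> *s a + \<beta> *s b"
    by (simp add: w_def \<alpha>_def \<beta>_def matrix_vector_mult_add_rdistrib ketbra_mult_vec)
  have "complex_of_real ((norm w)\<^sup>2) = cinner w w"
    by (rule cinner_self [symmetric])
  also have "\<dots> = of_real s + (cnj \<alpha> * \<beta> * c + cnj (cnj \<alpha> * \<beta> * c))"
    using assms
    by (simp add: w cinner_add_left cinner_add_right cinner_scale_left cinner_scale_right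
        cinner_self_unit cinner_commute [of b a] c_def s_def mult.assoc [symmetric]
        cnj_mult_self) (simp add: algebra_simps complex_norm_square [symmetric])
  finally have "(norm w)\<^sup>2 = s + 2 * Re (cnj \<alpha> * \<beta> * c)"
    by (metis Re_complex_of_real complex_add_cnj plus_complex.sel(1))
  also have "Re (cnj \<alpha> * \<beta> * c) \<le> cmod \<alpha> * cmod \<beta> * cmod c"
    by (metis complex_Re_le_cmod complex_mod_cnj norm_mult)
  also have "s + 2 * (cmod \<alpha> * cmod \<beta> * cmod c) \<le> (1 + cmod c) * s"
  proof -
    have "2 * (cmod \<alpha> * cmod \<beta>) \<le> s"
      using sum_squares_bound [of "cmod \<alpha>" "cmod \<beta>"] by (simp add: s_def mult.assoc)
    then show ?thesis
      using mult_right_mono [of "2 * (cmod \<alpha> * cmod \<beta>)" s "cmod c"] by (simp add: algebra_simps)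
  qed
  finally have w_sq: "(norm w)\<^sup>2 \<le> (1 + cmod c) * s"
    by simp
  have "complex_of_real s = cinner v w"
    by (simp add: w_def s_def \<alpha>_def \<beta>_def qform_def [symmetric] qform_add qform_ketbra)
  then have "s \<le> norm v * norm w"
    by (metis Re_complex_of_real cinner_Cauchy_Schwarz complex_Re_le_cmod order_trans)
  then have "(norm w)\<^sup>2 \<le> ((1 + cmod c) * norm v) * norm w"
    using w_sq mult_left_mono [of s "norm v * norm w" "1 + cmod c"] by (simp add: mult_ac)
  then show ?thesis
    unfolding w_def [symmetric] c_def [symmetric]
    by (cases "norm w = 0") (simp_all add: power2_eq_square)
qed

lemma ketbra_add_eigenvector:
  assumes "norm a = 1" "norm b = 1"
    and \<omega>: "cmod \<omega> = 1" "\<omega> * cinner a b = of_real (cmod (cinner a b))"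
  defines "r \<equiv> 1 + cmod (cinner a b)"
  shows "cinner a (a + \<omega> *s b) = of_real r"
    and "cinner b (a + \<omega> *s b) = \<omega> * of_real r"
    and "(norm (a + \<omega> *s b))\<^sup>2 = 2 * r"
proof -
  define c where "c = cinner a b"
  have "cnj \<omega> * \<omega> = 1"
    using \<omega>(1) by (simp add: cnj_mult_self)
  have "\<omega> * (cnj \<omega> * cnj c) = \<omega> * of_real (cmod c)"
    using arg_cong [OF \<omega>(2), of cnj] by (simp add: c_def)
  then have c: "cnj c = \<omega> * of_real (cmod c)"
    using \<open>cnj \<omega> * \<omega> = 1\<close> by (simp add: mult.assoc [symmetric] mult.commute [of \<omega>])
  show a: "cinner a (a + \<omega> *s b) = of_real r"
    using assms by (simp add: r_def cinner_add_right cinner_scale_right cinner_self_unit)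
  show b: "cinner b (a + \<omega> *s b) = \<omega> * of_real r"
    using assms c by (simp add: r_def c_def cinner_add_right cinner_scale_right cinner_self_unit
        cinner_commute [of b a] algebra_simps)
  have "complex_of_real ((norm (a + \<omega> *s b))\<^sup>2) = of_real r + cnj \<omega> * (\<omega> * of_real r)"
    by (simp only: cinner_self [symmetric] cinner_add_left cinner_scale_left a b)
  also have "\<dots> = of_real (2 * r)"
    using \<open>cnj \<omega> * \<omega> = 1\<close> by (simp add: mult.assoc [symmetric])
  finally show "(norm (a + \<omega> *s b))\<^sup>2 = 2 * r"
    by (simp only: of_real_eq_iff)
qed

lemma opnorm_ketbra_add:
  assumes "norm a = 1" "norm b = 1"
  shows "opnorm (ketbra a + ketbra b) = 1 + cmod (cinner a b)"
proof (rule antisym)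
  show "opnorm (ketbra a + ketbra b) \<le> 1 + cmod (cinner a b)"
    unfolding opnorm_def by (rule onorm_le) (rule norm_ketbra_add_mult_vec_le [OF assms])
  define r where "r = 1 + cmod (cinner a b)"
  obtain \<omega> where \<omega>: "cmod \<omega> = 1" "\<omega> * cinner a b = of_real (cmod (cinner a b))"
    using exists_phase by blast
  define v where "v = a + \<omega> *s b"
  note eigen = ketbra_add_eigenvector [OF assms \<omega>, folded r_def v_def]
  have "(ketbra a + ketbra b) *v v = of_real r *s v"
    by (simp add: matrix_vector_mult_add_rdistrib ketbra_mult_vec eigen(1,2))
       (simp add: v_def vec_eq_iff algebra_simps)
  moreover have "0 < r"
    by (simp add: r_def add_pos_nonneg)
  ultimately have "norm ((ketbra a + ketbra b) *v v) = r * norm v"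
    by (simp add: norm_scale_cvec)
  moreover have "v \<noteq> 0"
    using eigen(3) \<open>0 < r\<close> by auto
  ultimately show "r \<le> opnorm (ketbra a + ketbra b)"
    using onorm [OF matrix_vector_mul_bounded_linear, of "ketbra a + ketbra b" v]
    by (simp add: opnorm_def)
qed

section \<open>Overlaps of two orthonormal bases\<close>

definition overlap_sum :: "('a::finite \<Rightarrow> complex ^ 'n::finite) \<Rightarrow> ('b::finite \<Rightarrow> complex ^ 'n) \<Rightarrow> real" where
  "overlap_sum \<phi> \<psi> = (\<Sum>x\<in>UNIV. \<Sum>y\<in>UNIV. cmod (cinner (\<phi> x) (\<psi> y)))"

lemma P_qrac_ketbra:
  fixes \<phi> \<psi> :: "'n::finite \<Rightarrow> complex ^ 'n"
  assumes "\<And>x. norm (\<phi> x) = 1" "\<And>y. norm (\<psi> y) = 1"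
  shows "P_qrac (\<lambda>x. ketbra (\<phi> x)) (\<lambda>y. ketbra (\<psi> y))
    = 1/2 + overlap_sum \<phi> \<psi> / (2 * real CARD('n) ^ 2)"
proof -
  have "(\<Sum>x\<in>UNIV. \<Sum>y\<in>UNIV. opnorm (ketbra (\<phi> x) + ketbra (\<psi> y)))
      = (\<Sum>x\<in>UNIV. \<Sum>y\<in>UNIV. 1 + cmod (cinner (\<phi> x) (\<psi> y)))"
    by (simp add: opnorm_ketbra_add assms)
  also have "\<dots> = real CARD('n) ^ 2 + overlap_sum \<phi> \<psi>"
    by (simp add: overlap_sum_def sum.distrib power2_eq_square)
  finally show ?thesis
    by (simp add: P_qrac_def add_divide_distrib)
qed

lemma cmod_cinner_le_1: "norm a = 1 \<Longrightarrow> norm b = 1 \<Longrightarrow> cmod (cinner a b) \<le> 1"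
  using cinner_Cauchy_Schwarz [of a b] by simp

lemma sum_overlap_squares:
  fixes \<phi> \<psi> :: "'n::finite \<Rightarrow> complex ^ 'n"
  assumes "orthonormal_basis \<phi>" "orthonormal_basis \<psi>"
  shows "(\<Sum>x\<in>UNIV. \<Sum>y\<in>UNIV. (cmod (cinner (\<phi> x) (\<psi> y)))\<^sup>2) = real CARD('n)"
  using orthonormal_basis_Parseval [OF assms(2)] orthonormal_basis_norm [OF assms(1)]
  by (simp add: cmod_cinner_commute)

lemma overlap_sum_ge:
  fixes \<phi> \<psi> :: "'n::finite \<Rightarrow> complex ^ 'n"
  assumes "orthonormal_basis \<phi>" "orthonormal_basis \<psi>"
  shows "real CARD('n) \<le> overlap_sum \<phi> \<psi>"
proof -
  have "(cmod (cinner (\<phi> x) (\<psi> y)))\<^sup>2 \<le> cmod (cinner (\<phi> x) (\<psi> y))" for x y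
    using cmod_cinner_le_1 [OF orthonormal_basis_norm [OF assms(1)] orthonormal_basis_norm [OF assms(2)]]
    by (simp add: power2_eq_square mult_left_le_one_le)
  then show ?thesis
    unfolding overlap_sum_def sum_overlap_squares [OF assms, symmetric] by (intro sum_mono)
qed

lemma zero_one_doubly_stochastic_permutation:
  fixes f :: "'a::finite \<Rightarrow> 'a \<Rightarrow> real"
  assumes zero_one: "\<And>x y. f x y = 0 \<or> f x y = 1"
    and col: "\<And>y. (\<Sum>x\<in>UNIV. f x y) = 1" and row: "\<And>x. (\<Sum>y\<in>UNIV. f x y) = 1"
  obtains \<sigma> where "\<sigma> permutes UNIV" "\<And>y. f (\<sigma> y) y = 1"
proof -
  have "\<exists>x. f x y = 1" for y
    using col [of y] zero_one by (metis (no_types) sum.neutral zero_neq_one)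
  then obtain \<sigma> where \<sigma>: "\<And>y. f (\<sigma> y) y = 1"
    by metis
  have "inj \<sigma>"
  proof (rule injI, rule ccontr)
    fix y1 y2
    assume "\<sigma> y1 = \<sigma> y2" "y1 \<noteq> y2"
    then have "2 = (\<Sum>y\<in>{y1, y2}. f (\<sigma> y1) y)"
      using \<sigma> [of y1] \<sigma> [of y2] by simp
    also have "\<dots> \<le> (\<Sum>y\<in>UNIV. f (\<sigma> y1) y)"
      using zero_one by (intro sum_mono2) (auto, metis order.refl zero_le_one)
    finally show False
      using row [of "\<sigma> y1"] by simp
  qed
  then have "\<sigma> permutes UNIV"
    by (intro bij_imp_permutes) (simp_all add: bij_def finite_UNIV_inj_surj)
  with \<sigma> show ?thesis
    using that by blast
qed

lemma ketbra_scale_unimodular: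
  assumes "cmod c = 1"
  shows "ketbra (c *s a) = ketbra a"
proof -
  have "c * cnj c = 1"
    using assms complex_norm_square [of c] by simp
  then show ?thesis
    by (simp add: ketbra_def vec_eq_iff mult_ac)
qed

lemma ketbra_eq_if_cmod_cinner_eq_1:
  assumes "norm a = 1" "norm b = 1" "cmod (cinner a b) = 1"
  shows "ketbra b = ketbra a"
proof -
  define c where "c = cinner a b"
  have "complex_of_real ((norm (b - c *s a))\<^sup>2) = cinner (b - c *s a) (b - c *s a)"
    by (rule cinner_self [symmetric])
  also have "\<dots> = 1 - cnj c * c"
    using assms
    by (simp add: cinner_diff_left cinner_diff_right cinner_scale_left
        cinner_scale_right cinner_self_unit cinner_commute [of b a] c_def)
  also have "\<dots> = 0"
    using assms(3) by (simp add: c_def cnj_mult_self)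
  finally have "b = c *s a"
    by simp
  then show ?thesis
    using ketbra_scale_unimodular assms(3) c_def by metis
qed

lemma overlap_sum_le_imp_permutation:
  fixes \<phi> \<psi> :: "'n::finite \<Rightarrow> complex ^ 'n"
  assumes \<phi>: "orthonormal_basis \<phi>" and \<psi>: "orthonormal_basis \<psi>"
    and le: "overlap_sum \<phi> \<psi> \<le> real CARD('n)"
  obtains \<sigma> where "\<sigma> permutes UNIV" "\<And>y. ketbra (\<psi> y) = ketbra (\<phi> (\<sigma> y))"
proof -
  define t where "t x y = cmod (cinner (\<phi> x) (\<psi> y))" for x y
  have sq_le: "(t x y)\<^sup>2 \<le> t x y" for x y
    using cmod_cinner_le_1 [OF orthonormal_basis_norm [OF \<phi>] orthonormal_basis_norm [OF \<psi>]]
    by (simp add: t_def power2_eq_square mult_left_le_one_le)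
  have total_le: "(\<Sum>x\<in>UNIV. \<Sum>y\<in>UNIV. t x y - (t x y)\<^sup>2) \<le> 0"
    using le sum_overlap_squares [OF \<phi> \<psi>] by (simp add: sum_subtractf t_def overlap_sum_def)
  have term_le: "t x y - (t x y)\<^sup>2 \<le> (\<Sum>x\<in>UNIV. \<Sum>y\<in>UNIV. t x y - (t x y)\<^sup>2)" for x y
  proof -
    have "t x y - (t x y)\<^sup>2 \<le> (\<Sum>y\<in>UNIV. t x y - (t x y)\<^sup>2)"
      by (rule member_le_sum) (auto intro: sq_le)
    also have "\<dots> \<le> (\<Sum>x\<in>UNIV. \<Sum>y\<in>UNIV. t x y - (t x y)\<^sup>2)"
      by (rule member_le_sum [of x]) (simp_all add: sq_le sum_nonneg)
    finally show ?thesis .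
  qed
  have "t x y = (t x y)\<^sup>2" for x y
    using total_le term_le [of x y] sq_le [of x y] by linarith
  then have zero_one: "t x y = 0 \<or> t x y = 1" for x y
    by (metis power2_eq_square mult_cancel_right1 mult_eq_0_iff)
  have "(\<Sum>x\<in>UNIV. t x y) = 1" for y
    using orthonormal_basis_Parseval [OF \<phi>, of "\<psi> y"] orthonormal_basis_norm [OF \<psi>, of y]
      \<open>\<And>x y. t x y = (t x y)\<^sup>2\<close> by (simp add: t_def)
  moreover have "(\<Sum>y\<in>UNIV. t x y) = 1" for x
    using orthonormal_basis_Parseval [OF \<psi>, of "\<phi> x"] orthonormal_basis_norm [OF \<phi>, of x]
      \<open>\<And>x y. t x y = (t x y)\<^sup>2\<close> by (simp add: t_def cmod_cinner_commute)
  ultimately obtain \<sigma> where "\<sigma> permutes UNIV" "\<And>y. t (\<sigma> y) y = 1"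
    using zero_one_doubly_stochastic_permutation zero_one by blast
  moreover have "ketbra (\<psi> y) = ketbra (\<phi> (\<sigma> y))" for y
    using ketbra_eq_if_cmod_cinner_eq_1 orthonormal_basis_norm [OF \<phi>] orthonormal_basis_norm [OF \<psi>]
      \<open>\<And>y. t (\<sigma> y) y = 1\<close> unfolding t_def by blast
  ultimately show ?thesis
    using that by blast
qed

section \<open>Joint measurements\<close>

lemma sum_row_col_le:
  fixes f :: "'a::finite \<Rightarrow> 'b::finite \<Rightarrow> real"
  assumes "\<And>x y. 0 \<le> f x y"
  shows "(\<Sum>y'\<in>UNIV. f x y') + (\<Sum>x'\<in>UNIV. f x' y) \<le> f x y + (\<Sum>x'\<in>UNIV. \<Sum>y'\<in>UNIV. f x' y')"
proof -
  have "(\<Sum>x'\<in>UNIV. \<Sum>y'\<in>UNIV. f x' y') = (\<Sum>y'\<in>UNIV. f x y') + (\<Sum>x'\<in>UNIV - {x}. \<Sum>y'\<in>UNIV. f x' y')"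
    by (rule sum.remove) auto
  moreover have "(\<Sum>x'\<in>UNIV. f x' y) = f x y + (\<Sum>x'\<in>UNIV - {x}. f x' y)"
    by (rule sum.remove) auto
  moreover have "(\<Sum>x'\<in>UNIV - {x}. f x' y) \<le> (\<Sum>x'\<in>UNIV - {x}. \<Sum>y'\<in>UNIV. f x' y')"
    by (intro sum_mono member_le_sum) (auto intro: assms)
  ultimately show ?thesis
    by linarith
qed

lemma povm_psd: "povm G \<Longrightarrow> psd (G p)"
  by (simp add: povm_def)

lemma povm_sum_pairs: "povm G \<Longrightarrow> (\<Sum>x\<in>UNIV. \<Sum>y\<in>UNIV. G (x, y)) = mat 1"
  by (simp add: povm_def sum.cartesian_product)

lemma joint_povm_overlap_bound:
  fixes G :: "'a::finite \<times> 'b::finite \<Rightarrow> 'n::finite cmat"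
  assumes G: "povm G"
    and row: "(\<Sum>y'\<in>UNIV. G (x, y')) = ketbra a" and col: "(\<Sum>x'\<in>UNIV. G (x', y)) = ketbra b"
    and unit: "norm a = 1" "norm b = 1"
  shows "cmod (cinner a b) + (cmod (cinner a b))\<^sup>2 \<le> Re (qform (G (x, y)) a) + Re (qform (G (x, y)) b)"
proof -
  define t where "t = cmod (cinner a b)"
  obtain \<omega> where \<omega>: "cmod \<omega> = 1" "\<omega> * cinner a b = of_real (cmod (cinner a b))"
    using exists_phase by blast
  define v where "v = a + \<omega> *s b"
  note eigen = ketbra_add_eigenvector [OF unit \<omega>, folded t_def v_def]
  have "cmod (complex_of_real (1 + t)) = 1 + t"
    by (simp only: norm_of_real) (simp add: t_def)
  then have norm_r: "cmod (1 + complex_of_real t) = 1 + t"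
    by simp
  \<comment> \<open>Row x and column y of F each carry (1 + t)^2, the whole of F only 2 (1 + t).\<close>
  define F where "F x' y' = Re (qform (G (x', y')) v)" for x' y'
  have "(\<Sum>y'\<in>UNIV. F x y') = (1 + t)\<^sup>2"
    using row eigen(1) norm_r by (simp add: F_def Re_sum [symmetric] qform_sum [symmetric] qform_ketbra)
  moreover have "(\<Sum>x'\<in>UNIV. F x' y) = (1 + t)\<^sup>2"
    using col eigen(2) \<omega>(1) norm_r
    by (simp add: F_def Re_sum [symmetric] qform_sum [symmetric] qform_ketbra norm_mult)
  moreover have "(\<Sum>x'\<in>UNIV. \<Sum>y'\<in>UNIV. F x' y') = 2 * (1 + t)"
    using povm_sum_pairs [OF G] eigen(3)
    by (simp add: F_def Re_sum [symmetric] qform_sum [symmetric] qform_id)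
  moreover have "F x y \<le> 2 * Re (qform (G (x, y)) a) + 2 * Re (qform (G (x, y)) b)"
    using psd_qform_add_le [OF povm_psd [OF G], of "(x, y)" a "\<omega> *s b"] \<omega>(1)
    by (simp add: F_def v_def qform_scale)
  moreover have "(\<Sum>y'\<in>UNIV. F x y') + (\<Sum>x'\<in>UNIV. F x' y) \<le> F x y + (\<Sum>x'\<in>UNIV. \<Sum>y'\<in>UNIV. F x' y')"
    by (rule sum_row_col_le) (simp add: F_def psd_qform_nonneg povm_psd [OF G])
  ultimately show ?thesis
    unfolding t_def [symmetric] by (simp add: power2_eq_square algebra_simps)
qed

lemma compatible_imp_overlap_sum_le:
  fixes \<phi> \<psi> :: "'n::finite \<Rightarrow> complex ^ 'n"
  assumes \<phi>: "orthonormal_basis \<phi>" and \<psi>: "orthonormal_basis \<psi>"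
    and "compatible (\<lambda>x. ketbra (\<phi> x)) (\<lambda>y. ketbra (\<psi> y))"
  shows "overlap_sum \<phi> \<psi> \<le> real CARD('n)"
proof -
  obtain G :: "'n \<times> 'n \<Rightarrow> 'n cmat" where G: "povm G"
    and row: "\<And>x. (\<Sum>y\<in>UNIV. G (x, y)) = ketbra (\<phi> x)"
    and col: "\<And>y. (\<Sum>x\<in>UNIV. G (x, y)) = ketbra (\<psi> y)"
    using assms(3) unfolding compatible_def by blast
  define g where "g x y = Re (qform (G (x, y)) (\<phi> x))" for x y
  define h where "h x y = Re (qform (G (x, y)) (\<psi> y))" for x y
  have "(\<Sum>y\<in>UNIV. g x y) = 1" for x
    using row [of x] orthonormal_basis_norm [OF \<phi>, of x]
    by (simp add: g_def Re_sum [symmetric] qform_sum [symmetric] qform_ketbra cinner_self_unit)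
  then have sum_g: "(\<Sum>x\<in>UNIV. \<Sum>y\<in>UNIV. g x y) = real CARD('n)"
    by simp
  have "(\<Sum>x\<in>UNIV. h x y) = 1" for y
    using col [of y] orthonormal_basis_norm [OF \<psi>, of y]
    by (simp add: h_def Re_sum [symmetric] qform_sum [symmetric] qform_ketbra cinner_self_unit)
  then have sum_h: "(\<Sum>x\<in>UNIV. \<Sum>y\<in>UNIV. h x y) = real CARD('n)"
    by (subst sum.swap) simp
  have "(\<Sum>x\<in>UNIV. \<Sum>y\<in>UNIV. cmod (cinner (\<phi> x) (\<psi> y)) + (cmod (cinner (\<phi> x) (\<psi> y)))\<^sup>2)
      \<le> (\<Sum>x\<in>UNIV. \<Sum>y\<in>UNIV. g x y + h x y)"
    unfolding g_def h_def
    by (intro sum_mono joint_povm_overlap_bound [OF G row col] orthonormal_basis_norm \<phi> \<psi>)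
  then show ?thesis
    using sum_g sum_h sum_overlap_squares [OF \<phi> \<psi>] by (simp add: sum.distrib overlap_sum_def)
qed

lemma orthonormal_basis_povm: "orthonormal_basis b \<Longrightarrow> povm (\<lambda>x. ketbra (b x))"
  by (simp add: povm_def psd_ketbra orthonormal_basis_sum_ketbra)

lemma povm_compatible_permute:
  fixes M :: "'a::finite \<Rightarrow> 'n::finite cmat"
  assumes M: "povm M" and \<sigma>: "\<sigma> permutes UNIV"
  shows "compatible M (\<lambda>y. M (\<sigma> y))"
proof -
  define G where "G p = (if fst p = \<sigma> (snd p) then M (fst p) else 0)" for p
  have row: "(\<Sum>y\<in>UNIV. G (x, y)) = M x" for x
    using permutes_inverses [OF \<sigma>] by (simp add: G_def eq_commute [of x] sum.delta'
        flip: permutes_inv_eq [OF \<sigma>])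
  have "psd (G p)" for p
    using M by (simp add: G_def povm_def psd_def cinner_def)
  moreover have "(\<Sum>p\<in>UNIV. G p) = mat 1"
  proof -
    have "(\<Sum>p\<in>UNIV. G p) = (\<Sum>x\<in>UNIV. \<Sum>y\<in>UNIV. G (x, y))"
      by (simp add: sum.cartesian_product)
    then show ?thesis
      using M by (simp add: row povm_def)
  qed
  moreover have "(\<Sum>x\<in>UNIV. G (x, y)) = M (\<sigma> y)" for y
    by (simp add: G_def)
  ultimately show ?thesis
    unfolding compatible_def povm_def using row by blast
qed

theorem proposition1:
  fixes \<phi> \<psi> :: "'n::finite \<Rightarrow> complex ^ 'n"
    and M1 M2 :: "'n \<Rightarrow> 'n cmat"
  assumes "CARD('n) \<ge> 2"
    and "orthonormal_basis \<phi>" and "orthonormal_basis \<psi>"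
    and "\<And>x. M1 x = ketbra (\<phi> x)" and "\<And>y. M2 y = ketbra (\<psi> y)"
  shows "P_qrac M1 M2 \<ge> 1/2 * (1 + 1 / real CARD('n)) \<and>
         (P_qrac M1 M2 = 1/2 * (1 + 1 / real CARD('n)) \<longleftrightarrow> compatible M1 M2) \<and>
         (compatible M1 M2 \<longleftrightarrow> (\<exists>\<sigma>. \<sigma> permutes UNIV \<and> (\<forall>y. M2 y = M1 (\<sigma> y))))"
proof -
  have M1: "M1 = (\<lambda>x. ketbra (\<phi> x))" and M2: "M2 = (\<lambda>y. ketbra (\<psi> y))"
    using assms(4,5) by auto
  define d where "d = real CARD('n)"
  have excess: "P_qrac M1 M2 - 1/2 * (1 + 1 / d) = (overlap_sum \<phi> \<psi> - d) / (2 * d\<^sup>2)"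
    unfolding M1 M2 d_def
    by (simp add: P_qrac_ketbra orthonormal_basis_norm assms(2,3) field_simps power2_eq_square)
  have ge: "d \<le> overlap_sum \<phi> \<psi>"
    unfolding d_def by (rule overlap_sum_ge [OF assms(2,3)])
  have perm_imp_compatible: "compatible M1 M2" if "\<sigma> permutes UNIV" "\<forall>y. M2 y = M1 (\<sigma> y)" for \<sigma>
  proof -
    have "M2 = (\<lambda>y. M1 (\<sigma> y))"
      using that(2) by auto
    then show ?thesis
      using povm_compatible_permute [OF _ that(1)] orthonormal_basis_povm [OF assms(2)]
      by (simp add: M1)
  qed
  have le_imp_perm: "\<exists>\<sigma>. \<sigma> permutes UNIV \<and> (\<forall>y. M2 y = M1 (\<sigma> y))" if le: "overlap_sum \<phi> \<psi> \<le> d"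
  proof -
    obtain \<sigma> where "\<sigma> permutes UNIV" "\<And>y. ketbra (\<psi> y) = ketbra (\<phi> (\<sigma> y))"
      using overlap_sum_le_imp_permutation [OF assms(2,3) le [unfolded d_def]] by blast
    then show ?thesis
      using assms(4,5) by auto
  qed
  have compatible_imp_le: "overlap_sum \<phi> \<psi> \<le> d" if "compatible M1 M2"
    using compatible_imp_overlap_sum_le [OF assms(2,3)] that unfolding M1 M2 d_def .
  have "0 < d"
    by (simp add: d_def)
  then have "0 \<le> (overlap_sum \<phi> \<psi> - d) / (2 * d\<^sup>2)"
    and "(overlap_sum \<phi> \<psi> - d) / (2 * d\<^sup>2) = 0 \<longleftrightarrow> overlap_sum \<phi> \<psi> = d"
    using ge by simp_all
  then show ?thesis
    using excess ge perm_imp_compatible le_imp_perm compatible_imp_le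
    unfolding d_def [symmetric] by (smt (verit))
qed

end
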